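(* Let $c:I\to\mathbb{L}^3$ ($I\subset\mathbb{R}$ an open interval) be a regular real analytic curve which is spacelike or timelike, and let $n:I\to\mathbb{L}^3$ be a real analytic spacelike unit normal vector field along $c$ (i.e. $\langle n,n\rangle=1$ and $\langle n(t),c'(t)\rangle=0$). Then there exists a Born-Infeld soliton general surface which solves the Björling problem for $(c,n)$, i.e. a Born-Infeld soliton general surface $X:\Omega\to\mathbb{L}^3$, with $\Omega\subset\mathbb{R}^2$ open containing $I\times\{0\}$, such that $X(t,0)=c(t)$ and the unit normal of $X$ satisfies $N(t,0)=n(t)$ for all $t\in I$.
   Context: $\mathbb{L}^3$ denotes $\mathbb{R}^3$ with the metric $\langle\cdot,\cdot\rangle$ given by $ds^2=dx^2+dy^2-dz^2$. A function $\psi$ on an open set of the $(u,v)$-plane is a Born-Infeld soliton (in the variables $u,v$) if $(1-\psi_v^2)\psi_{uu}+2\psi_u\psi_v\psi_{uv}-(1+\psi_u^2)\psi_{vv}=0$. A surface is a Born-Infeld soliton general surface if it is locally of the form $(\psi(y,z),y,z)$, $(x,\psi(x,z),z)$ or $(x,y,\psi(x,y))$ where $\psi$ solves the Born-Infeld equation (in the respective pair of variables). *)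

theory Defs
  imports "HOL-Analysis.Analysis"
begin

text \<open>Lorentz-Minkowski space L^3: R^3 with ds^2 = dx^2 + dy^2 - dz^2.\<close>
definition lprod :: "real^3 \<Rightarrow> real^3 \<Rightarrow> real" where
  "lprod a b = a$1 * b$1 + a$2 * b$2 - a$3 * b$3"

definition real_analytic_fun_on :: "(real \<Rightarrow> real) \<Rightarrow> real set \<Rightarrow> bool" where
  "real_analytic_fun_on f S \<longleftrightarrow>
     (\<forall>t\<in>S. \<exists>r>0. \<exists>a::nat \<Rightarrow> real.
        \<forall>s\<in>S. \<bar>s - t\<bar> < r \<longrightarrow> (\<lambda>k. a k * (s - t) ^ k) sums f s)"

definition real_analytic_curve_on :: "(real \<Rightarrow> real^3) \<Rightarrow> real set \<Rightarrow> bool" where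
  "real_analytic_curve_on c S \<longleftrightarrow> (\<forall>i. real_analytic_fun_on (\<lambda>t. c t $ i) S)"

definition pd_u :: "(real \<times> real \<Rightarrow> real) \<Rightarrow> real \<times> real \<Rightarrow> real" where
  "pd_u f p = deriv (\<lambda>s. f (s, snd p)) (fst p)"

definition pd_v :: "(real \<times> real \<Rightarrow> real) \<Rightarrow> real \<times> real \<Rightarrow> real" where
  "pd_v f p = deriv (\<lambda>s. f (fst p, s)) (snd p)"

definition born_infeld_soliton :: "(real \<times> real \<Rightarrow> real) \<Rightarrow> (real \<times> real) set \<Rightarrow> bool" where
  "born_infeld_soliton \<psi> V \<longleftrightarrow>
     open V \<and> \<psi> differentiable_on V \<and>
     pd_u \<psi> differentiable_on V \<and> pd_v \<psi> differentiable_on V \<and>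
     (\<forall>p\<in>V. (1 - (pd_v \<psi> p)\<^sup>2) * pd_u (pd_u \<psi>) p
              + 2 * pd_u \<psi> p * pd_v \<psi> p * pd_u (pd_v \<psi>) p
              - (1 + (pd_u \<psi> p)\<^sup>2) * pd_v (pd_v \<psi>) p = 0)"

definition graph_x :: "(real \<times> real \<Rightarrow> real) \<Rightarrow> (real \<times> real) set \<Rightarrow> (real^3) set" where
  "graph_x \<psi> V = {vector [\<psi> (y, z), y, z] | y z. (y, z) \<in> V}"

definition graph_y :: "(real \<times> real \<Rightarrow> real) \<Rightarrow> (real \<times> real) set \<Rightarrow> (real^3) set" where
  "graph_y \<psi> V = {vector [x, \<psi> (x, z), z] | x z. (x, z) \<in> V}"

definition graph_z :: "(real \<times> real \<Rightarrow> real) \<Rightarrow> (real \<times> real) set \<Rightarrow> (real^3) set" where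
  "graph_z \<psi> V = {vector [x, y, \<psi> (x, y)] | x y. (x, y) \<in> V}"

definition X_u :: "(real \<times> real \<Rightarrow> real^3) \<Rightarrow> real \<times> real \<Rightarrow> real^3" where
  "X_u X p = frechet_derivative X (at p) (1, 0)"

definition X_v :: "(real \<times> real \<Rightarrow> real^3) \<Rightarrow> real \<times> real \<Rightarrow> real^3" where
  "X_v X p = frechet_derivative X (at p) (0, 1)"

definition regular_surface :: "(real \<times> real \<Rightarrow> real^3) \<Rightarrow> (real \<times> real) set \<Rightarrow> bool" where
  "regular_surface X \<Omega> \<longleftrightarrow> open \<Omega> \<and>
     (\<forall>p\<in>\<Omega>. X differentiable (at p) \<and> X_u X p \<noteq> 0 \<and>
              (\<forall>a::real. X_v X p \<noteq> a *\<^sub>R X_u X p))"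

definition BI_general_surface :: "(real \<times> real \<Rightarrow> real^3) \<Rightarrow> (real \<times> real) set \<Rightarrow> bool" where
  "BI_general_surface X \<Omega> \<longleftrightarrow> regular_surface X \<Omega> \<and>
     (\<forall>p\<in>\<Omega>. \<exists>U. open U \<and> p \<in> U \<and> U \<subseteq> \<Omega> \<and>
        (\<exists>\<psi> V. born_infeld_soliton \<psi> V \<and>
           (X ` U = graph_x \<psi> V \<or> X ` U = graph_y \<psi> V \<or> X ` U = graph_z \<psi> V)))"

definition unit_normal_field ::
  "(real \<times> real \<Rightarrow> real^3) \<Rightarrow> (real \<times> real \<Rightarrow> real^3) \<Rightarrow> (real \<times> real) set \<Rightarrow> bool" where
  "unit_normal_field X N \<Omega> \<longleftrightarrow> continuous_on \<Omega> N \<and>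
     (\<forall>p\<in>\<Omega>. lprod (N p) (X_u X p) = 0 \<and> lprod (N p) (X_v X p) = 0 \<and>
              \<bar>lprod (N p) (N p)\<bar> = 1)"

end

theory Submission
  imports Defs
begin

(* Write c' = dc/dt. Since n is a unit spacelike normal of c', the vectors
   a = (c' + n \<times> c')/2 and b = (c' - n \<times> c')/2 (with \<times> the Lorentzian cross product) are null,
   <a, b> = <c', c'>/2 \<noteq> 0 and a \<times> b = (<c', c'>/2) n. Integrating a and b gives null curves F, G
   with F + G = c, and X(u, v) = F(u + v) + G(u - v) is an immersion with unit normal
   (a \<times> b)/<a, b>, which restricts to n on v = 0.
   The normal a \<times> b is spacelike, so it is not parallel to the z-axis; hence, by the inverse
   function theorem, X is locally a graph over the (y, z)- or the (x, z)-plane. The slopes of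
   the graph are ratios of components of a \<times> b, and the Born-Infeld equation for it becomes a
   polynomial identity in a, b and their derivatives which holds because a and b are null.
   Analyticity is only used to make c twice and n once differentiable. *)

section \<open>Real analytic curves\<close>

lemma real_analytic_fun_on_cong:
  assumes "real_analytic_fun_on f S" and "\<And>s. s \<in> S \<Longrightarrow> f s = g s"
  shows "real_analytic_fun_on g S"
  using assms(1) unfolding real_analytic_fun_on_def by (simp add: assms(2))

lemma power_series_has_real_derivative:
  assumes f: "\<And>z. norm z < R \<Longrightarrow> (\<lambda>k. a k * z ^ k) sums f (t + z)" and s: "\<bar>s - t\<bar> < R"
  shows "(f has_real_derivative (\<Sum>k. diffs a k * (s - t) ^ k)) (at s)"
    and "summable (\<lambda>k. diffs a k * (s - t) ^ k)"
proof -
  have summable: "summable (\<lambda>k. a k * z ^ k)" if "norm z < R" for z :: real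
    using f[OF that] sums_summable by blast
  have "norm (s - t) < R"
    using s by simp
  from DERIV_chain2[OF termdiffs_strong'[OF summable this] DERIV_diff[OF DERIV_ident DERIV_const]]
  have series: "((\<lambda>s. \<Sum>k. a k * (s - t) ^ k) has_real_derivative (\<Sum>k. diffs a k * (s - t) ^ k)) (at s)"
    by simp
  have "f x = (\<Sum>k. a k * (x - t) ^ k)" if "x \<in> ball t R" for x
    using f[of "x - t"] that by (simp add: sums_iff dist_real_def abs_minus_commute)
  moreover have "s \<in> ball t R"
    using s by (simp add: dist_real_def abs_minus_commute)
  ultimately show "(f has_real_derivative (\<Sum>k. diffs a k * (s - t) ^ k)) (at s)"
    by (intro has_field_derivative_transform_within_open[OF series, of "ball t R"]) auto
  show "summable (\<lambda>k. diffs a k * (s - t) ^ k)"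
    using termdiff_converges[OF \<open>norm (s - t) < R\<close>] summable by blast
qed

lemma real_analytic_fun_on_termwise_deriv:
  assumes an: "real_analytic_fun_on f S" and S: "open S" and t: "t \<in> S"
  shows "\<exists>R>0. \<exists>a. \<forall>s. \<bar>s - t\<bar> < R \<longrightarrow> s \<in> S \<and>
    (\<lambda>k. diffs a k * (s - t) ^ k) sums deriv f s \<and> (f has_real_derivative deriv f s) (at s)"
proof -
  obtain r a where r: "r > 0" and a: "\<forall>s\<in>S. \<bar>s - t\<bar> < r \<longrightarrow> (\<lambda>k. a k * (s - t) ^ k) sums f s"
    using an t unfolding real_analytic_fun_on_def by blast
  obtain e where e: "e > 0" "ball t e \<subseteq> S"
    using S t open_contains_ball by blast
  define R where "R = min r e"
  have in_S: "s \<in> S" if "\<bar>s - t\<bar> < R" for s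
    using that e(2) by (auto simp: R_def dist_real_def)
  have sums_f: "(\<lambda>k. a k * z ^ k) sums f (t + z)" if "norm z < R" for z :: real
    using a in_S[of "t + z"] that by (auto simp: R_def)
  have "s \<in> S \<and> (\<lambda>k. diffs a k * (s - t) ^ k) sums deriv f s \<and> (f has_real_derivative deriv f s) (at s)"
    if s: "\<bar>s - t\<bar> < R" for s
    using power_series_has_real_derivative[OF sums_f s] in_S[OF s]
    by (simp add: DERIV_imp_deriv summable_sums)
  moreover have "R > 0"
    using r e by (simp add: R_def)
  ultimately show ?thesis
    by blast
qed

lemma real_analytic_fun_on_has_real_derivative:
  assumes "real_analytic_fun_on f S" "open S" "t \<in> S"
  shows "(f has_real_derivative deriv f t) (at t)"
  using real_analytic_fun_on_termwise_deriv[OF assms] by force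

lemma real_analytic_fun_on_deriv:
  assumes "real_analytic_fun_on f S" "open S"
  shows "real_analytic_fun_on (deriv f) S"
  using real_analytic_fun_on_termwise_deriv[OF assms]
  unfolding real_analytic_fun_on_def by blast

lemma has_vector_derivative_vec_lambda:
  fixes c :: "real \<Rightarrow> real^'n"
  assumes "\<And>i. ((\<lambda>t. c t $ i) has_real_derivative d i) (at t within S)"
  shows "(c has_vector_derivative (\<chi> i. d i)) (at t within S)"
  unfolding has_vector_derivative_def
  using assms by (subst has_derivative_componentwise_within)
    (auto simp: Basis_vec_def inner_axis has_real_derivative_iff_has_vector_derivative
      has_vector_derivative_def)

lemma real_analytic_curve_on_has_vector_derivative:
  assumes "real_analytic_curve_on c S" "open S" "t \<in> S"
  shows "(c has_vector_derivative (\<chi> i. deriv (\<lambda>s. c s $ i) t)) (at t)"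
  using assms real_analytic_fun_on_has_real_derivative
  by (intro has_vector_derivative_vec_lambda) (auto simp: real_analytic_curve_on_def)

lemma real_analytic_curve_on_differentiable:
  assumes "real_analytic_curve_on c S" "open S" "t \<in> S"
  shows "c differentiable (at t)"
  using real_analytic_curve_on_has_vector_derivative[OF assms] by (rule differentiableI_vector)

lemma real_analytic_curve_on_vector_derivative:
  assumes c: "real_analytic_curve_on c S" and S: "open S"
  shows "real_analytic_curve_on (\<lambda>t. vector_derivative c (at t)) S"
  unfolding real_analytic_curve_on_def
proof
  fix i
  have "real_analytic_fun_on (deriv (\<lambda>s. c s $ i)) S"
    using c S real_analytic_fun_on_deriv unfolding real_analytic_curve_on_def by blast
  moreover have "deriv (\<lambda>s. c s $ i) t = vector_derivative c (at t) $ i" if "t \<in> S" for t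
    using vector_derivative_at[OF real_analytic_curve_on_has_vector_derivative[OF c S that]]
    by simp
  ultimately show "real_analytic_fun_on (\<lambda>t. vector_derivative c (at t) $ i) S"
    by (rule real_analytic_fun_on_cong)
qed

section \<open>Antiderivatives on open intervals\<close>

lemma open_interval_Icc_neighbourhood:
  fixes I :: "real set"
  assumes I: "open I" "is_interval I" and xy: "x \<in> I" "y \<in> I"
  obtains d e where "{d..e} \<subseteq> I" "d < min x y" "max x y < e"
proof -
  have "min x y \<in> I" "max x y \<in> I"
    using xy by (simp_all add: min_def max_def)
  then obtain r r' where r: "r > 0" "ball (min x y) r \<subseteq> I" and r': "r' > 0" "ball (max x y) r' \<subseteq> I"
    using I(1) open_contains_ball by meson
  have "min x y - r/2 \<in> ball (min x y) r" "max x y + r'/2 \<in> ball (max x y) r'"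
    using r(1) r'(1) by (simp_all add: dist_real_def)
  then have "min x y - r/2 \<in> I" "max x y + r'/2 \<in> I"
    using r(2) r'(2) by blast+
  then have "{min x y - r/2 .. max x y + r'/2} \<subseteq> I"
    using I(2) unfolding is_interval_1 by (meson atLeastAtMost_iff subsetI)
  then show ?thesis
    by (rule that) (use r(1) r'(1) in auto)
qed

lemma open_interval_antiderivative:
  fixes f :: "real \<Rightarrow> 'a::euclidean_space"
  assumes I: "open I" "is_interval I" and f: "continuous_on I f"
  obtains K where "\<And>x. x \<in> I \<Longrightarrow> (K has_vector_derivative f x) (at x)"
proof (cases "I = {}")
  case False
  then obtain t0 where t0: "t0 \<in> I" by blast
  define K where "K u = (LBINT y=t0..u. f y)" for u :: real
  have "(K has_vector_derivative f x) (at x)" if x: "x \<in> I" for x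
  proof -
    obtain d e where de: "{d..e} \<subseteq> I" "d < min x t0" "max x t0 < e"
      using open_interval_Icc_neighbourhood[OF I x t0] .
    then have "(K has_vector_derivative f x) (at x within {d..e})"
      unfolding K_def[abs_def]
      by (intro interval_integral_FTC2 continuous_on_subset[OF f]) simp_all
    then have "(K has_vector_derivative f x) (at x within {d<..<e})"
      by (rule has_vector_derivative_within_subset) auto
    moreover have "x \<in> {d<..<e}"
      using de by simp
    ultimately show ?thesis
      by (metis has_vector_derivative_within_open open_greaterThanLessThan)
  qed
  then show ?thesis using that by blast
qed (use that in blast)

lemma has_vector_derivative_half_sum:
  assumes "(f has_vector_derivative f') F" "(g has_vector_derivative g') F"
  shows "((\<lambda>t. (1/2) *\<^sub>R (f t + g t)) has_vector_derivative (1/2) *\<^sub>R (f' + g')) F"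
    and "((\<lambda>t. (1/2) *\<^sub>R (f t - g t)) has_vector_derivative (1/2) *\<^sub>R (f' - g')) F"
  using bounded_linear.has_vector_derivative[OF bounded_linear_scaleR_right
      has_vector_derivative_add[OF assms]]
    bounded_linear.has_vector_derivative[OF bounded_linear_scaleR_right
      has_vector_derivative_diff[OF assms]]
  by simp_all

section \<open>The Lorentzian cross product\<close>

(* lprod (lcross a b) x is the determinant with rows x, a, b. *)
definition lcross :: "real^3 \<Rightarrow> real^3 \<Rightarrow> real^3" where
  "lcross a b = vector [a$2*b$3 - a$3*b$2, a$3*b$1 - a$1*b$3, a$2*b$1 - a$1*b$2]"

lemma lcross_nth [simp]:
  "lcross a b $ 1 = a$2*b$3 - a$3*b$2"
  "lcross a b $ 2 = a$3*b$1 - a$1*b$3"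
  "lcross a b $ 3 = a$2*b$1 - a$1*b$2"
  by (simp_all add: lcross_def)

lemma vec3_eq_iff: "(x::real^3) = y \<longleftrightarrow> x$1 = y$1 \<and> x$2 = y$2 \<and> x$3 = y$3"
  by (simp add: vec_eq_iff forall_3)

lemma bounded_bilinear_lprod: "bounded_bilinear lprod"
  unfolding bilinear_conv_bounded_bilinear[symmetric] bilinear_def lprod_def
  by (auto intro!: linearI simp: algebra_simps)

lemma bounded_bilinear_lcross: "bounded_bilinear lcross"
  unfolding bilinear_conv_bounded_bilinear[symmetric] bilinear_def
  by (auto intro!: linearI simp: vec3_eq_iff algebra_simps)

interpretation lprod: bounded_bilinear lprod
  by (rule bounded_bilinear_lprod)

interpretation lcross: bounded_bilinear lcross
  by (rule bounded_bilinear_lcross)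

lemma lprod_commute: "lprod a b = lprod b a"
  unfolding lprod_def by algebra

lemma lprod_lcross_left: "lprod (lcross a b) a = 0"
  unfolding lprod_def lcross_nth by algebra

lemma lprod_lcross_right: "lprod (lcross a b) b = 0"
  unfolding lprod_def lcross_nth by algebra

lemma lprod_lcross_lcross: "lprod (lcross a b) (lcross a b) = (lprod a b)\<^sup>2 - lprod a a * lprod b b"
  unfolding lprod_def lcross_nth by algebra

lemma lcross_lcross: "lcross (lcross a b) c = lprod b c *\<^sub>R a - lprod a c *\<^sub>R b"
  unfolding vec3_eq_iff lprod_def lcross_nth vector_minus_component vector_scaleR_component
    real_scaleR_def
  by (intro conjI; algebra)

lemma lcross_self [simp]: "lcross a a = 0"
  by (simp add: vec3_eq_iff)

lemma lcross_commute: "lcross a b = - lcross b a"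
  by (simp add: vec3_eq_iff)

lemma spacelike_horizontal_component:
  assumes "lprod v v > 0"
  shows "v $ 1 \<noteq> 0 \<or> v $ 2 \<noteq> 0"
  using assms unfolding lprod_def by (auto simp: mult_le_0_iff)

lemma null_frame:
  assumes n: "lprod n n = 1" "lprod n d = 0"
  defines "a \<equiv> (1/2) *\<^sub>R (d + lcross n d)" and "b \<equiv> (1/2) *\<^sub>R (d - lcross n d)"
  shows "lprod a a = 0" "lprod b b = 0" "lprod a b = lprod d d / 2"
    "lcross a b = (lprod d d / 2) *\<^sub>R n"
proof -
  have J: "lprod (lcross n d) (lcross n d) = - lprod d d"
    using n by (simp add: lprod_lcross_lcross)
  have Jd: "lprod (lcross n d) d = 0" "lprod d (lcross n d) = 0"
    using lprod_lcross_right lprod_commute by metis+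
  show "lprod a a = 0" "lprod b b = 0" "lprod a b = lprod d d / 2"
    unfolding a_def b_def
    by (simp_all add: lprod.add_left lprod.add_right lprod.diff_left lprod.diff_right
        lprod.scaleR_left lprod.scaleR_right J Jd)
  have "lcross (lcross n d) d = lprod d d *\<^sub>R n"
    using n by (simp add: lcross_lcross)
  then show "lcross a b = (lprod d d / 2) *\<^sub>R n"
    unfolding a_def b_def
    by (simp add: lcross.add_left lcross.add_right lcross.diff_left lcross.diff_right
        lcross.scaleR_left lcross.scaleR_right lcross_commute[of d "lcross n d"])
       (simp add: vec_eq_iff)
qed

definition null_pair_normal :: "real^3 \<Rightarrow> real^3 \<Rightarrow> real^3" where
  "null_pair_normal a b = (1 / lprod a b) *\<^sub>R lcross a b"

lemma null_pair_normal_orthogonal: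
  "lprod (null_pair_normal a b) a = 0" "lprod (null_pair_normal a b) b = 0"
  by (simp_all add: null_pair_normal_def lprod.scaleR_left lprod_lcross_left lprod_lcross_right)

lemma null_pair_normal_unit:
  assumes "lprod a a = 0" "lprod b b = 0" "lprod a b \<noteq> 0"
  shows "lprod (null_pair_normal a b) (null_pair_normal a b) = 1"
  using assms by (simp add: null_pair_normal_def lprod.scaleR_left lprod.scaleR_right
      lprod_lcross_lcross power2_eq_square)

lemma null_pair_independent:
  assumes "lprod a a = 0" "lprod b b = 0" "lprod a b \<noteq> 0"
  shows "a + b \<noteq> 0" "a - b \<noteq> k *\<^sub>R (a + b)"
proof -
  show "a + b \<noteq> 0"
  proof
    assume "a + b = 0"
    then have "lprod a b = - lprod a a"
      by (simp add: eq_neg_iff_add_eq_0[symmetric] add.commute lprod.minus_right)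
    with assms show False by simp
  qed
  show "a - b \<noteq> k *\<^sub>R (a + b)"
  proof
    assume h: "a - b = k *\<^sub>R (a + b)"
    then have "lprod (a - b) a = lprod (k *\<^sub>R (a + b)) a" by simp
    then have "(k + 1) * lprod a b = 0"
      using assms by (simp add: lprod.diff_left lprod.add_left lprod.scaleR_left
          lprod_commute[of b a] algebra_simps)
    then have "k = -1" using assms(3) by simp
    with h have "a = 0" by (simp add: vec_eq_iff)
    then show False using assms(3) by (simp add: lprod_def)
  qed
qed

section \<open>Calculus in the plane\<close>

definition mat2 :: "real \<Rightarrow> real \<Rightarrow> real \<Rightarrow> real \<Rightarrow> real \<times> real \<Rightarrow> real \<times> real" where
  "mat2 p q r s h = (p * fst h + q * snd h, r * fst h + s * snd h)"

definition mat2_inv :: "real \<Rightarrow> real \<Rightarrow> real \<Rightarrow> real \<Rightarrow> real \<times> real \<Rightarrow> real \<times> real" where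
  "mat2_inv p q r s =
     mat2 (s / (p * s - q * r)) (- q / (p * s - q * r)) (- r / (p * s - q * r)) (p / (p * s - q * r))"

lemma bounded_linear_mat2: "bounded_linear (mat2 p q r s)"
  unfolding mat2_def[abs_def] by (intro bounded_linear_intros)

lemma bounded_linear_mat2_inv: "bounded_linear (mat2_inv p q r s)"
  unfolding mat2_inv_def by (rule bounded_linear_mat2)

lemma mat2_inv_comp:
  assumes "p * s - q * r \<noteq> 0"
  shows "mat2 p q r s \<circ> mat2_inv p q r s = id" "mat2_inv p q r s \<circ> mat2 p q r s = id"
proof -
  define d where "d = p * s - q * r"
  have "d \<noteq> 0" using assms by (simp add: d_def)
  then have "mat2 p q r s (mat2_inv p q r s (u, v)) = (u, v)"
    "mat2_inv p q r s (mat2 p q r s (u, v)) = (u, v)" for u v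
    unfolding mat2_inv_def mat2_def d_def[symmetric]
    by (simp_all add: field_simps) (simp_all add: d_def algebra_simps)
  then show "mat2 p q r s \<circ> mat2_inv p q r s = id" "mat2_inv p q r s \<circ> mat2 p q r s = id"
    by (simp_all add: fun_eq_iff)
qed

lemma inv_mat2: "p * s - q * r \<noteq> 0 \<Longrightarrow> inv (mat2 p q r s) = mat2_inv p q r s"
  by (rule inv_unique_comp[OF mat2_inv_comp])

lemma continuous_on_Blinfun_mat2:
  fixes p q r s :: "'a::t2_space \<Rightarrow> real"
  assumes "continuous_on S p" "continuous_on S q" "continuous_on S r" "continuous_on S s"
  shows "continuous_on S (\<lambda>w. Blinfun (mat2 (p w) (q w) (r w) (s w)))"
proof (rule continuous_on_blinfun_componentwise)
  fix i :: "real \<times> real" assume "i \<in> Basis"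
  then have "i = (1, 0) \<or> i = (0, 1)"
    by (auto simp: Basis_prod_def)
  then show "continuous_on S (\<lambda>w. blinfun_apply (Blinfun (mat2 (p w) (q w) (r w) (s w))) i)"
    using assms by (auto simp: bounded_linear_Blinfun_apply[OF bounded_linear_mat2] mat2_def
        intro!: continuous_intros)
qed

lemma inverse_function_theorem_2d:
  fixes \<Phi> :: "real \<times> real \<Rightarrow> real \<times> real"
  assumes Om: "open Om" "w0 \<in> Om"
    and \<Phi>: "\<And>w. w \<in> Om \<Longrightarrow> (\<Phi> has_derivative mat2 (p w) (q w) (r w) (s w)) (at w)"
    and cont: "continuous_on Om p" "continuous_on Om q" "continuous_on Om r" "continuous_on Om s"
    and det: "p w0 * s w0 - q w0 * r w0 \<noteq> 0"
  obtains U V g where "open U" "w0 \<in> U" "U \<subseteq> Om" "open V" "homeomorphism U V \<Phi> g"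
    "\<And>w. w \<in> U \<Longrightarrow> p w * s w - q w * r w \<noteq> 0"
    "\<And>y. y \<in> V \<Longrightarrow> (g has_derivative mat2_inv (p (g y)) (q (g y)) (r (g y)) (s (g y))) (at y)"
proof -
  \<comment> \<open>On Om' the derivative is invertible everywhere, so that g' can be written with mat2_inv.\<close>
  define Om' where "Om' = Om \<inter> (\<lambda>w. p w * s w - q w * r w) -` (- {0})"
  have "open Om'"
    unfolding Om'_def using Om(1) cont
    by (intro continuous_open_preimage continuous_intros) auto
  have Om': "w0 \<in> Om'" "Om' \<subseteq> Om" "\<And>w. w \<in> Om' \<Longrightarrow> p w * s w - q w * r w \<noteq> 0"
    using Om(2) det by (auto simp: Om'_def)
  define L where "L w = Blinfun (mat2 (p w) (q w) (r w) (s w))" for w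
  have L: "blinfun_apply (L w) = mat2 (p w) (q w) (r w) (s w)" for w
    unfolding L_def by (rule bounded_linear_Blinfun_apply[OF bounded_linear_mat2])
  have L_cont: "continuous_on Om' L"
    unfolding L_def using Om'(2) cont by (intro continuous_on_Blinfun_mat2) (auto intro: continuous_on_subset)
  have L_inv: "Blinfun (mat2_inv (p w0) (q w0) (r w0) (s w0)) o\<^sub>L L w0 = id_blinfun"
    by (intro blinfun_eqI) (simp add: L bounded_linear_Blinfun_apply[OF bounded_linear_mat2_inv]
        pointfree_idE[OF mat2_inv_comp(2)[OF det]])
  have \<Phi>_L: "\<And>w. w \<in> Om' \<Longrightarrow> (\<Phi> has_derivative blinfun_apply (L w)) (at w)"
    using \<Phi> Om'(2) by (auto simp: L)
  obtain U V g g' where UV: "open U" "U \<subseteq> Om'" "w0 \<in> U" "open V" "\<Phi> w0 \<in> V"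
    "homeomorphism U V \<Phi> g"
    and g: "\<And>y. y \<in> V \<Longrightarrow> (g has_derivative g' y) (at y)"
      "\<And>y. y \<in> V \<Longrightarrow> g' y = inv (blinfun_apply (L (g y)))"
    and "\<And>y. y \<in> V \<Longrightarrow> bij (blinfun_apply (L (g y)))"
    using inverse_function_theorem[OF \<open>open Om'\<close> \<Phi>_L L_cont Om'(1) L_inv] by blast
  have "(g has_derivative mat2_inv (p (g y)) (q (g y)) (r (g y)) (s (g y))) (at y)" if y: "y \<in> V" for y
  proof -
    have "g y \<in> Om'"
      using UV(2,6) y unfolding homeomorphism_def by blast
    then have "g' y = mat2_inv (p (g y)) (q (g y)) (r (g y)) (s (g y))"
      using g(2)[OF y] Om'(3) by (simp add: L inv_mat2)
    with g(1)[OF y] show ?thesis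
      by simp
  qed
  moreover have "U \<subseteq> Om" "\<And>w. w \<in> U \<Longrightarrow> p w * s w - q w * r w \<noteq> 0"
    using UV(2) Om'(2,3) by auto
  ultimately show ?thesis
    using that UV(1,3,4,6) by blast
qed

lemma pd_u_pd_v_has_derivative:
  fixes f :: "real \<times> real \<Rightarrow> real"
  assumes f: "(f has_derivative (\<lambda>h. fu * fst h + fv * snd h)) (at y)"
  shows "pd_u f y = fu" "pd_v f y = fv"
proof -
  have f': "(f has_derivative (\<lambda>h. fu * fst h + fv * snd h)) (at (fst y, snd y))"
    using f by simp
  have "((\<lambda>t. (t, snd y)) has_derivative (\<lambda>h. (h, 0))) (at (fst y))"
    "((\<lambda>t. (fst y, t)) has_derivative (\<lambda>h. (0, h))) (at (snd y))"
    by (auto intro!: derivative_eq_intros)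
  from diff_chain_at[OF this(1) f'] diff_chain_at[OF this(2) f']
  have "((\<lambda>t. f (t, snd y)) has_derivative (\<lambda>h. fu * h)) (at (fst y))"
    "((\<lambda>t. f (fst y, t)) has_derivative (\<lambda>h. fv * h)) (at (snd y))"
    by (simp_all add: o_def)
  then show "pd_u f y = fu" "pd_v f y = fv"
    unfolding pd_u_def pd_v_def has_field_derivative_def[symmetric]
    by (simp_all add: DERIV_imp_deriv)
qed

lemma has_derivative_comp_mat2_inv:
  assumes "(g has_derivative mat2_inv p q r s) (at y)"
    "(k has_derivative (\<lambda>h. ku * fst h + kv * snd h)) (at (g y))"
  shows "((\<lambda>y. k (g y)) has_derivative (\<lambda>h. ((ku * s - kv * r) / (p * s - q * r)) * fst h
    + ((kv * p - ku * q) / (p * s - q * r)) * snd h)) (at y)"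
  using diff_chain_at[OF assms] unfolding o_def
  by (rule has_derivative_eq_rhs)
    (simp add: fun_eq_iff mat2_inv_def mat2_def diff_divide_distrib add_divide_distrib algebra_simps)

lemma pd_comp_mat2_inv:
  assumes V: "open V" "y \<in> V" and \<phi>: "\<And>y. y \<in> V \<Longrightarrow> \<phi> y = k (g y)"
    and g: "(g has_derivative mat2_inv p q r s) (at y)"
    and k: "(k has_derivative (\<lambda>h. ku * fst h + kv * snd h)) (at (g y))"
  shows "\<phi> differentiable (at y)" "pd_u \<phi> y = (ku * s - kv * r) / (p * s - q * r)"
    "pd_v \<phi> y = (kv * p - ku * q) / (p * s - q * r)"
proof -
  have \<phi>': "(\<phi> has_derivative (\<lambda>h. ((ku * s - kv * r) / (p * s - q * r)) * fst h
      + ((kv * p - ku * q) / (p * s - q * r)) * snd h)) (at y)"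
    using has_derivative_comp_mat2_inv[OF g k]
    by (rule has_derivative_transform_within_open[OF _ V]) (simp add: \<phi>)
  then show "\<phi> differentiable (at y)"
    by (rule differentiableI)
  from pd_u_pd_v_has_derivative[OF \<phi>'] show "pd_u \<phi> y = (ku * s - kv * r) / (p * s - q * r)"
    "pd_v \<phi> y = (kv * p - ku * q) / (p * s - q * r)" .
qed

lemma has_derivative_divide_partials:
  fixes f g :: "real \<times> real \<Rightarrow> real"
  assumes "(f has_derivative (\<lambda>h. fu * fst h + fv * snd h)) (at w)"
    "(g has_derivative (\<lambda>h. gu * fst h + gv * snd h)) (at w)" "g w \<noteq> 0"
  shows "((\<lambda>w. f w / g w) has_derivative (\<lambda>h. ((fu * g w - f w * gu) / (g w)\<^sup>2) * fst h
    + ((fv * g w - f w * gv) / (g w)\<^sup>2) * snd h)) (at w)"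
  using has_derivative_divide'[OF assms]
  by (rule has_derivative_eq_rhs) (use assms(3) in \<open>simp add: fun_eq_iff field_simps power2_eq_square\<close>)

lemma has_derivative_fst_comp:
  assumes "(\<phi> has_vector_derivative \<phi>') (at (fst w))"
  shows "((\<lambda>w. \<phi> (fst w)) has_derivative (\<lambda>h. fst h *\<^sub>R \<phi>')) (at w)"
  using diff_chain_at[OF has_derivative_fst[OF has_derivative_ident]
      assms[unfolded has_vector_derivative_def]]
  by (simp add: o_def)

lemma has_derivative_snd_comp:
  assumes "(\<phi> has_vector_derivative \<phi>') (at (snd w))"
  shows "((\<lambda>w. \<phi> (snd w)) has_derivative (\<lambda>h. snd h *\<^sub>R \<phi>')) (at w)"
  using diff_chain_at[OF has_derivative_snd[OF has_derivative_ident]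
      assms[unfolded has_vector_derivative_def]]
  by (simp add: o_def)

lemma has_derivative_lcross_curves:
  assumes "(a has_vector_derivative a') (at (fst w))" "(b has_vector_derivative b') (at (snd w))"
  shows "((\<lambda>w. lcross (a (fst w)) (b (snd w))) has_derivative
    (\<lambda>h. fst h *\<^sub>R lcross a' (b (snd w)) + snd h *\<^sub>R lcross (a (fst w)) b')) (at w)"
  using lcross.FDERIV[OF has_derivative_fst_comp[OF assms(1)] has_derivative_snd_comp[OF assms(2)]]
  by (rule has_derivative_eq_rhs) (simp add: fun_eq_iff lcross.scaleR_left lcross.scaleR_right)

definition ratio_deriv :: "real^3 \<Rightarrow> real^3 \<Rightarrow> 3 \<Rightarrow> real" where
  "ratio_deriv \<nu> \<nu>' i = (\<nu>' $ i * \<nu> $ 1 - \<nu> $ i * \<nu>' $ 1) / (\<nu> $ 1)\<^sup>2"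

lemma has_derivative_lcross_ratio:
  assumes "(a has_vector_derivative a') (at (fst w))" "(b has_vector_derivative b') (at (snd w))"
    and "lcross (a (fst w)) (b (snd w)) $ 1 \<noteq> 0"
  shows "((\<lambda>w. lcross (a (fst w)) (b (snd w)) $ i / lcross (a (fst w)) (b (snd w)) $ 1) has_derivative
    (\<lambda>h. ratio_deriv (lcross (a (fst w)) (b (snd w))) (lcross a' (b (snd w))) i * fst h
      + ratio_deriv (lcross (a (fst w)) (b (snd w))) (lcross (a (fst w)) b') i * snd h)) (at w)"
proof -
  have "((\<lambda>w. lcross (a (fst w)) (b (snd w)) $ j) has_derivative
      (\<lambda>h. lcross a' (b (snd w)) $ j * fst h + lcross (a (fst w)) b' $ j * snd h)) (at w)" for j
    using bounded_linear.has_derivative[OF bounded_linear_vec_nth has_derivative_lcross_curves[OF assms(1,2)]]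
    by (simp add: mult.commute)
  from has_derivative_divide_partials[OF this this assms(3)] show ?thesis
    unfolding ratio_deriv_def .
qed

section \<open>Graphs of surfaces in Lorentz-Minkowski space\<close>

lemma graph_x_image: "graph_x \<psi> V = (\<lambda>q. vector [\<psi> q, fst q, snd q]) ` V"
  unfolding graph_x_def by force

lemma graph_y_image: "graph_y \<psi> V = (\<lambda>q. vector [fst q, \<psi> q, snd q]) ` V"
  unfolding graph_y_def by force

lemma local_inverse_yz_projection:
  fixes Y A B :: "real \<times> real \<Rightarrow> real^3"
  assumes W0: "open W0" "w0 \<in> W0"
    and Y: "\<And>w. w \<in> W0 \<Longrightarrow> (Y has_derivative (\<lambda>h. fst h *\<^sub>R A w + snd h *\<^sub>R B w)) (at w)"
    and cont: "continuous_on W0 A" "continuous_on W0 B"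
    and w0: "lcross (A w0) (B w0) $ 1 \<noteq> 0"
  obtains U V g where "open U" "w0 \<in> U" "U \<subseteq> W0" "open V"
    "homeomorphism U V (\<lambda>w. (Y w $ 2, Y w $ 3)) g" "\<And>w. w \<in> U \<Longrightarrow> lcross (A w) (B w) $ 1 \<noteq> 0"
    "\<And>y. y \<in> V \<Longrightarrow>
      (g has_derivative mat2_inv (A (g y) $ 2) (B (g y) $ 2) (A (g y) $ 3) (B (g y) $ 3)) (at y)"
proof -
  have \<Phi>: "((\<lambda>w. (Y w $ 2, Y w $ 3)) has_derivative mat2 (A w $ 2) (B w $ 2) (A w $ 3) (B w $ 3)) (at w)"
    if "w \<in> W0" for w
    using has_derivative_Pair[OF bounded_linear.has_derivative[OF bounded_linear_vec_nth Y[OF that]]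
        bounded_linear.has_derivative[OF bounded_linear_vec_nth Y[OF that]]]
    by (rule has_derivative_eq_rhs) (simp add: mat2_def fun_eq_iff mult.commute)
  have det: "A w $ 2 * B w $ 3 - B w $ 2 * A w $ 3 = lcross (A w) (B w) $ 1" for w
    by (simp add: mult.commute)
  have cont_nth: "continuous_on W0 (\<lambda>w. A w $ i)" "continuous_on W0 (\<lambda>w. B w $ i)" for i
    using cont by (simp_all add: continuous_on_component)
  have "A w0 $ 2 * B w0 $ 3 - B w0 $ 2 * A w0 $ 3 \<noteq> 0"
    using w0 unfolding det .
  then obtain U V g where UV: "open U" "w0 \<in> U" "U \<subseteq> W0" "open V"
    "homeomorphism U V (\<lambda>w. (Y w $ 2, Y w $ 3)) g"
    and det_U: "\<And>w. w \<in> U \<Longrightarrow> A w $ 2 * B w $ 3 - B w $ 2 * A w $ 3 \<noteq> 0"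
    and g: "\<And>y. y \<in> V \<Longrightarrow>
      (g has_derivative mat2_inv (A (g y) $ 2) (B (g y) $ 2) (A (g y) $ 3) (B (g y) $ 3)) (at y)"
    using inverse_function_theorem_2d[OF W0 \<Phi> cont_nth(1)[of 2] cont_nth(2)[of 2]
        cont_nth(1)[of 3] cont_nth(2)[of 3]] by blast
  moreover have "lcross (A w) (B w) $ 1 \<noteq> 0" if "w \<in> U" for w
    using det_U[OF that] unfolding det .
  ultimately show ?thesis
    using that by blast
qed

lemma graph_x_homeomorphism:
  assumes "homeomorphism U V (\<lambda>w. (Y w $ 2, Y w $ 3)) g"
  shows "Y ` U = graph_x (\<lambda>y. Y (g y) $ 1) V"
proof -
  have "Y w = vector [Y (g (Y w $ 2, Y w $ 3)) $ 1, Y w $ 2, Y w $ 3]" if "w \<in> U" for w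
    using assms that unfolding homeomorphism_def by (simp add: vec3_eq_iff)
  then have "Y ` U = (\<lambda>q. vector [Y (g q) $ 1, fst q, snd q]) ` (\<lambda>w. (Y w $ 2, Y w $ 3)) ` U"
    by (simp add: image_image cong: image_cong)
  also have "(\<lambda>w. (Y w $ 2, Y w $ 3)) ` U = V"
    using assms unfolding homeomorphism_def by blast
  finally show ?thesis
    by (simp add: graph_x_image)
qed

lemma graph_x_slopes:
  fixes Y A B :: "real \<times> real \<Rightarrow> real^3"
  assumes V: "open V" "y \<in> V"
    and g: "(g has_derivative mat2_inv (A (g y) $ 2) (B (g y) $ 2) (A (g y) $ 3) (B (g y) $ 3)) (at y)"
    and Y: "(Y has_derivative (\<lambda>h. fst h *\<^sub>R A (g y) + snd h *\<^sub>R B (g y))) (at (g y))"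
  shows "(\<lambda>y. Y (g y) $ 1) differentiable (at y)"
    "pd_u (\<lambda>y. Y (g y) $ 1) y = - (lcross (A (g y)) (B (g y)) $ 2 / lcross (A (g y)) (B (g y)) $ 1)"
    "pd_v (\<lambda>y. Y (g y) $ 1) y = lcross (A (g y)) (B (g y)) $ 3 / lcross (A (g y)) (B (g y)) $ 1"
proof -
  have "((\<lambda>w. Y w $ 1) has_derivative (\<lambda>h. A (g y) $ 1 * fst h + B (g y) $ 1 * snd h)) (at (g y))"
    using bounded_linear.has_derivative[OF bounded_linear_vec_nth Y] by (simp add: mult.commute)
  note pd = pd_comp_mat2_inv[OF V _ g this, of "\<lambda>y. Y (g y) $ 1"]
  show "(\<lambda>y. Y (g y) $ 1) differentiable (at y)"
    using pd(1) by simp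
  show "pd_u (\<lambda>y. Y (g y) $ 1) y = - (lcross (A (g y)) (B (g y)) $ 2 / lcross (A (g y)) (B (g y)) $ 1)"
    "pd_v (\<lambda>y. Y (g y) $ 1) y = lcross (A (g y)) (B (g y)) $ 3 / lcross (A (g y)) (B (g y)) $ 1"
    using pd(2,3) unfolding lcross_nth minus_divide_left by (simp_all add: algebra_simps)
qed

(* For the surface (s, t) \<mapsto> F s + G t with F' = a, F'' = a', G' = b, G'' = b' and normal
   \<nu> = lcross a b, the conclusion is the Born-Infeld equation of the graph x = \<psi>(y, z): \<psi>u, ..., \<psi>vv
   are the partial derivatives of \<psi>, and ks i, kt i the s- and t-derivatives of \<nu>_i / \<nu>_1. *)
lemma born_infeld_identity_null_pair:
  fixes a b a' b' :: "real^3"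
  defines "\<nu> \<equiv> lcross a b" and "\<nu>s \<equiv> lcross a' b" and "\<nu>t \<equiv> lcross a b'"
  defines "ks \<equiv> ratio_deriv \<nu> \<nu>s" and "kt \<equiv> ratio_deriv \<nu> \<nu>t"
  assumes null: "lprod a a = 0" "lprod b b = 0" and D: "\<nu> $ 1 \<noteq> 0"
    and \<psi>: "\<psi>u = - (\<nu> $ 2 / \<nu> $ 1)" "\<psi>v = \<nu> $ 3 / \<nu> $ 1"
      "\<psi>uu = (kt 2 * a$3 - ks 2 * b$3) / \<nu> $ 1"
      "\<psi>uv = (ks 3 * b$3 - kt 3 * a$3) / \<nu> $ 1"
      "\<psi>vv = (kt 3 * a$2 - ks 3 * b$2) / \<nu> $ 1"
  shows "(1 - \<psi>v\<^sup>2) * \<psi>uu + 2 * \<psi>u * \<psi>v * \<psi>uv - (1 + \<psi>u\<^sup>2) * \<psi>vv = 0"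
proof -
  have "(1 - \<psi>v\<^sup>2) * \<psi>uu + 2 * \<psi>u * \<psi>v * \<psi>uv - (1 + \<psi>u\<^sup>2) * \<psi>vv
    = (((\<nu> $ 1)\<^sup>2 - (\<nu> $ 3)\<^sup>2) * (- (\<nu>s $ 2 * \<nu> $ 1 - \<nu> $ 2 * \<nu>s $ 1) * b$3
          + (\<nu>t $ 2 * \<nu> $ 1 - \<nu> $ 2 * \<nu>t $ 1) * a$3)
       - 2 * \<nu> $ 2 * \<nu> $ 3 * ((\<nu>s $ 3 * \<nu> $ 1 - \<nu> $ 3 * \<nu>s $ 1) * b$3
          - (\<nu>t $ 3 * \<nu> $ 1 - \<nu> $ 3 * \<nu>t $ 1) * a$3)
       - ((\<nu> $ 1)\<^sup>2 + (\<nu> $ 2)\<^sup>2) * ((\<nu>t $ 3 * \<nu> $ 1 - \<nu> $ 3 * \<nu>t $ 1) * a$2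
          - (\<nu>s $ 3 * \<nu> $ 1 - \<nu> $ 3 * \<nu>s $ 1) * b$2)) / (\<nu> $ 1) ^ 5"
    unfolding \<psi> ks_def kt_def ratio_deriv_def using D
    by (simp add: field_simps power2_eq_square power_def)
  also have "\<dots> = 0"
    using null unfolding \<nu>_def \<nu>s_def \<nu>t_def lprod_def lcross_nth by algebra
  finally show ?thesis .
qed

section \<open>Translation surfaces of null curves\<close>

definition swap_xy :: "real^3 \<Rightarrow> real^3" where
  "swap_xy x = vector [x$2, x$1, x$3]"

lemma swap_xy_nth [simp]: "swap_xy x $ 1 = x $ 2" "swap_xy x $ 2 = x $ 1" "swap_xy x $ 3 = x $ 3"
  by (simp_all add: swap_xy_def)

lemma swap_xy_swap_xy [simp]: "swap_xy (swap_xy x) = x"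
  by (simp add: vec3_eq_iff)

lemma swap_xy_vector [simp]: "swap_xy (vector [x, y, z]) = vector [y, x, z]"
  by (simp add: vec3_eq_iff)

lemma bounded_linear_swap_xy: "bounded_linear swap_xy"
  unfolding linear_conv_bounded_linear[symmetric]
  by (auto intro!: linearI simp: vec3_eq_iff)

lemma swap_xy_add: "swap_xy (x + y) = swap_xy x + swap_xy y"
  by (simp add: vec3_eq_iff)

lemma lprod_swap_xy [simp]: "lprod (swap_xy x) (swap_xy y) = lprod x y"
  by (simp add: lprod_def)

lemma swap_xy_graph_x: "swap_xy ` graph_x \<psi> V = graph_y \<psi> V"
  unfolding graph_x_image graph_y_image image_image by simp

locale null_curve_pair =
  fixes I :: "real set" and F G a b a' b' :: "real \<Rightarrow> real^3"
  assumes open_I: "open I"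
    and F: "\<And>s. s \<in> I \<Longrightarrow> (F has_vector_derivative a s) (at s)"
    and a: "\<And>s. s \<in> I \<Longrightarrow> (a has_vector_derivative a' s) (at s)"
    and G: "\<And>t. t \<in> I \<Longrightarrow> (G has_vector_derivative b t) (at t)"
    and b: "\<And>t. t \<in> I \<Longrightarrow> (b has_vector_derivative b' t) (at t)"
    and null: "\<And>s. s \<in> I \<Longrightarrow> lprod (a s) (a s) = 0" "\<And>t. t \<in> I \<Longrightarrow> lprod (b t) (b t) = 0"
begin

definition null_surface :: "real \<times> real \<Rightarrow> real^3" where
  "null_surface w = F (fst w) + G (snd w)"

definition null_normal :: "real \<times> real \<Rightarrow> real^3" where
  "null_normal w = lcross (a (fst w)) (b (snd w))"

definition null_domain :: "(real \<times> real) set" where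
  "null_domain = {w \<in> I \<times> I. lprod (a (fst w)) (b (snd w)) \<noteq> 0}"

lemma null_surface_has_derivative:
  assumes "w \<in> I \<times> I"
  shows "(null_surface has_derivative (\<lambda>h. fst h *\<^sub>R a (fst w) + snd h *\<^sub>R b (snd w))) (at w)"
  unfolding null_surface_def[abs_def] using assms F G
  by (intro has_derivative_add has_derivative_fst_comp has_derivative_snd_comp) auto

lemma continuous_on_a: "continuous_on I a"
  using a by (intro continuous_at_imp_continuous_on ballI has_vector_derivative_continuous)

lemma continuous_on_b: "continuous_on I b"
  using b by (intro continuous_at_imp_continuous_on ballI has_vector_derivative_continuous)

lemma continuous_on_partials:
  "continuous_on (I \<times> I) (\<lambda>w. a (fst w))" "continuous_on (I \<times> I) (\<lambda>w. b (snd w))"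
  by (rule continuous_on_compose2[OF continuous_on_a continuous_on_fst[OF continuous_on_id]], force)
    (rule continuous_on_compose2[OF continuous_on_b continuous_on_snd[OF continuous_on_id]], force)

lemma open_null_domain: "open null_domain"
proof -
  have "open ((I \<times> I) \<inter> (\<lambda>w. lprod (a (fst w)) (b (snd w))) -` (- {0}))"
    using open_I continuous_on_partials
    by (intro continuous_open_preimage lprod.continuous_on open_Times) auto
  moreover have "(I \<times> I) \<inter> (\<lambda>w. lprod (a (fst w)) (b (snd w))) -` (- {0}) = null_domain"
    by (auto simp: null_domain_def)
  ultimately show ?thesis by simp
qed

lemma null_normal_ratio_has_derivative:
  assumes "w \<in> I \<times> I" "null_normal w $ 1 \<noteq> 0"
  shows "((\<lambda>w. null_normal w $ i / null_normal w $ 1) has_derivative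
    (\<lambda>h. ratio_deriv (null_normal w) (lcross (a' (fst w)) (b (snd w))) i * fst h
      + ratio_deriv (null_normal w) (lcross (a (fst w)) (b' (snd w))) i * snd h)) (at w)"
  using has_derivative_lcross_ratio[OF a b] assms unfolding null_normal_def by auto

lemma born_infeld_soliton_graph_x:
  assumes V: "open V" and gV: "\<And>y. y \<in> V \<Longrightarrow> g y \<in> I \<times> I" "\<And>y. y \<in> V \<Longrightarrow> null_normal (g y) $ 1 \<noteq> 0"
    and g: "\<And>y. y \<in> V \<Longrightarrow> (g has_derivative mat2_inv (a (fst (g y)) $ 2) (b (snd (g y)) $ 2)
      (a (fst (g y)) $ 3) (b (snd (g y)) $ 3)) (at y)"
  shows "born_infeld_soliton (\<lambda>y. null_surface (g y) $ 1) V"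
proof -
  define \<psi> where "\<psi> y = null_surface (g y) $ 1" for y
  define ks where "ks i w = ratio_deriv (null_normal w) (lcross (a' (fst w)) (b (snd w))) i" for i w
  define kt where "kt i w = ratio_deriv (null_normal w) (lcross (a (fst w)) (b' (snd w))) i" for i w
  have det: "a (fst w) $ 2 * b (snd w) $ 3 - b (snd w) $ 2 * a (fst w) $ 3 = null_normal w $ 1" for w
    by (simp add: null_normal_def mult.commute)
  have \<psi>: "\<psi> differentiable (at y)" "pd_u \<psi> y = - (null_normal (g y) $ 2 / null_normal (g y) $ 1)"
    "pd_v \<psi> y = null_normal (g y) $ 3 / null_normal (g y) $ 1" if y: "y \<in> V" for y
    using graph_x_slopes[where A = "\<lambda>w. a (fst w)" and B = "\<lambda>w. b (snd w)",
        OF V y g[OF y] null_surface_has_derivative[OF gV(1)[OF y]]]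
    unfolding \<psi>_def[abs_def] null_normal_def .
  have \<psi>u: "pd_u \<psi> differentiable (at y)" "pd_u (pd_u \<psi>) y =
      (kt 2 (g y) * a (fst (g y)) $ 3 - ks 2 (g y) * b (snd (g y)) $ 3) / null_normal (g y) $ 1"
    if y: "y \<in> V" for y
  proof -
    have "((\<lambda>w. - (null_normal w $ 2 / null_normal w $ 1)) has_derivative
        (\<lambda>h. - ks 2 (g y) * fst h + - kt 2 (g y) * snd h)) (at (g y))"
      using has_derivative_minus[OF null_normal_ratio_has_derivative[OF gV[OF y], of 2]]
      by (simp add: ks_def kt_def algebra_simps)
    from pd_comp_mat2_inv[OF V y _ g[OF y] this, of "pd_u \<psi>"] \<psi> show
      "pd_u \<psi> differentiable (at y)" "pd_u (pd_u \<psi>) y =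
      (kt 2 (g y) * a (fst (g y)) $ 3 - ks 2 (g y) * b (snd (g y)) $ 3) / null_normal (g y) $ 1"
      unfolding det by (simp_all add: algebra_simps)
  qed
  have \<psi>v: "pd_v \<psi> differentiable (at y)"
    "pd_u (pd_v \<psi>) y = (ks 3 (g y) * b (snd (g y)) $ 3 - kt 3 (g y) * a (fst (g y)) $ 3) / null_normal (g y) $ 1"
    "pd_v (pd_v \<psi>) y = (kt 3 (g y) * a (fst (g y)) $ 2 - ks 3 (g y) * b (snd (g y)) $ 2) / null_normal (g y) $ 1"
    if y: "y \<in> V" for y
    using pd_comp_mat2_inv[OF V y _ g[OF y] null_normal_ratio_has_derivative[OF gV[OF y], of 3],
        of "pd_v \<psi>"] \<psi>
    unfolding det ks_def kt_def by simp_all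
  show ?thesis
    unfolding born_infeld_soliton_def \<psi>_def[symmetric]
  proof (intro conjI ballI V)
    show "\<psi> differentiable_on V" "pd_u \<psi> differentiable_on V" "pd_v \<psi> differentiable_on V"
      using \<psi>(1) \<psi>u(1) \<psi>v(1) by (simp_all add: differentiable_at_imp_differentiable_on)
  next
    fix y assume y: "y \<in> V"
    show "(1 - (pd_v \<psi> y)\<^sup>2) * pd_u (pd_u \<psi>) y + 2 * pd_u \<psi> y * pd_v \<psi> y * pd_u (pd_v \<psi>) y
        - (1 + (pd_u \<psi> y)\<^sup>2) * pd_v (pd_v \<psi>) y = 0"
      using null gV[OF y] \<psi>(2,3)[OF y] \<psi>u(2)[OF y] \<psi>v(2,3)[OF y]
      unfolding null_normal_def ks_def kt_def
      by (intro born_infeld_identity_null_pair) auto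
  qed
qed

lemma null_surface_locally_graph_x:
  assumes W0: "open W0" "w0 \<in> W0" "W0 \<subseteq> I \<times> I" and w0: "null_normal w0 $ 1 \<noteq> 0"
  obtains W \<psi> V where "open W" "w0 \<in> W" "W \<subseteq> W0" "born_infeld_soliton \<psi> V"
    "null_surface ` W = graph_x \<psi> V"
proof -
  have "(null_surface has_derivative (\<lambda>h. fst h *\<^sub>R a (fst w) + snd h *\<^sub>R b (snd w))) (at w)"
    if "w \<in> W0" for w
    using null_surface_has_derivative W0(3) that by blast
  then obtain U V g where UV: "open U" "w0 \<in> U" "U \<subseteq> W0" "open V"
    and homeo: "homeomorphism U V (\<lambda>w. (null_surface w $ 2, null_surface w $ 3)) g"
    and nonzero: "\<And>w. w \<in> U \<Longrightarrow> null_normal w $ 1 \<noteq> 0"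
    and g: "\<And>y. y \<in> V \<Longrightarrow> (g has_derivative mat2_inv (a (fst (g y)) $ 2) (b (snd (g y)) $ 2)
      (a (fst (g y)) $ 3) (b (snd (g y)) $ 3)) (at y)"
    using local_inverse_yz_projection[OF W0(1,2) _ continuous_on_subset[OF continuous_on_partials(1) W0(3)]
        continuous_on_subset[OF continuous_on_partials(2) W0(3)]] w0
    unfolding null_normal_def by blast
  have "g y \<in> I \<times> I" "null_normal (g y) $ 1 \<noteq> 0" if "y \<in> V" for y
    using homeomorphism_image2[OF homeo] that UV(3) W0(3) nonzero by blast+
  then have "born_infeld_soliton (\<lambda>y. null_surface (g y) $ 1) V"
    using born_infeld_soliton_graph_x[OF UV(4) _ _ g] by blast
  then show ?thesis
    using that[OF UV(1-3)] graph_x_homeomorphism[OF homeo] by blast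
qed

lemma swapped_null_curve_pair:
  "null_curve_pair I (\<lambda>s. swap_xy (F s)) (\<lambda>t. swap_xy (G t)) (\<lambda>s. swap_xy (a s)) (\<lambda>t. swap_xy (b t))
    (\<lambda>s. swap_xy (a' s)) (\<lambda>t. swap_xy (b' t))"
  using open_I F a G b null bounded_linear.has_vector_derivative[OF bounded_linear_swap_xy]
  by unfold_locales simp_all

lemma null_surface_locally_graph:
  assumes W0: "open W0" "w0 \<in> W0" "W0 \<subseteq> null_domain"
  obtains W \<psi> V where "open W" "w0 \<in> W" "W \<subseteq> W0" "born_infeld_soliton \<psi> V"
    "null_surface ` W = graph_x \<psi> V \<or> null_surface ` W = graph_y \<psi> V"
proof -
  interpret swapped: null_curve_pair I "\<lambda>s. swap_xy (F s)" "\<lambda>t. swap_xy (G t)" "\<lambda>s. swap_xy (a s)"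
    "\<lambda>t. swap_xy (b t)" "\<lambda>s. swap_xy (a' s)" "\<lambda>t. swap_xy (b' t)"
    by (rule swapped_null_curve_pair)
  have W0_I: "W0 \<subseteq> I \<times> I"
    using W0(3) by (auto simp: null_domain_def)
  have "lprod (null_normal w0) (null_normal w0) > 0"
    using W0 null by (auto simp: null_domain_def null_normal_def lprod_lcross_lcross)
  then have "null_normal w0 $ 1 \<noteq> 0 \<or> null_normal w0 $ 2 \<noteq> 0"
    by (rule spacelike_horizontal_component)
  moreover have "swapped.null_normal w0 $ 1 = - null_normal w0 $ 2"
    by (simp add: null_normal_def swapped.null_normal_def)
  ultimately consider "null_normal w0 $ 1 \<noteq> 0" | "swapped.null_normal w0 $ 1 \<noteq> 0"
    by fastforce
  then show ?thesis
  proof cases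
    case 1
    obtain W \<psi> V where "open W" "w0 \<in> W" "W \<subseteq> W0" "born_infeld_soliton \<psi> V"
      "null_surface ` W = graph_x \<psi> V"
      using null_surface_locally_graph_x[OF W0(1,2) W0_I 1] by blast
    then show ?thesis
      using that by blast
  next
    case 2
    obtain W \<psi> V where W: "open W" "w0 \<in> W" "W \<subseteq> W0" "born_infeld_soliton \<psi> V"
      and graph: "swapped.null_surface ` W = graph_x \<psi> V"
      using swapped.null_surface_locally_graph_x[OF W0(1,2) W0_I 2] by blast
    have "null_surface ` W = swap_xy ` swapped.null_surface ` W"
      by (simp add: image_image null_surface_def swapped.null_surface_def swap_xy_add[symmetric])
    then show ?thesis
      using that[OF W] graph by (simp add: swap_xy_graph_x)
  qed
qed

(* The surface in the parameters (u, v) of the Bjoerling problem; (s, t) = (u + v, u - v) are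
   its null coordinates. *)
definition chart :: "real \<times> real \<Rightarrow> real \<times> real" where
  "chart p = (fst p + snd p, fst p - snd p)"

definition surface :: "real \<times> real \<Rightarrow> real^3" where
  "surface p = null_surface (chart p)"

definition normal :: "real \<times> real \<Rightarrow> real^3" where
  "normal p = null_pair_normal (a (fst p + snd p)) (b (fst p - snd p))"

definition domain :: "(real \<times> real) set" where
  "domain = chart -` null_domain"

lemma isCont_chart: "isCont chart p"
  unfolding chart_def by (intro continuous_intros)

lemma surj_chart: "surj chart"
proof (rule surjI)
  fix w :: "real \<times> real"
  show "chart ((fst w + snd w) / 2, (fst w - snd w) / 2) = w"
    by (simp add: chart_def prod_eq_iff field_simps)
qed

lemma open_domain: "open domain"
  unfolding domain_def by (rule continuous_open_vimage[OF open_null_domain isCont_chart])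

lemma domain_iff:
  "p \<in> domain \<longleftrightarrow> fst p + snd p \<in> I \<and> fst p - snd p \<in> I \<and>
    lprod (a (fst p + snd p)) (b (fst p - snd p)) \<noteq> 0"
  by (auto simp: domain_def null_domain_def chart_def)

lemma surface_partials:
  assumes "p \<in> domain"
  shows "X_u surface p = a (fst p + snd p) + b (fst p - snd p)"
    "X_v surface p = a (fst p + snd p) - b (fst p - snd p)"
    "surface differentiable (at p)"
proof -
  have "(chart has_derivative chart) (at p)"
    unfolding chart_def[abs_def] by (auto intro!: derivative_eq_intros)
  from diff_chain_at[OF this null_surface_has_derivative] assms
  have "(surface has_derivative
      (\<lambda>h. (fst h + snd h) *\<^sub>R a (fst p + snd p) + (fst h - snd h) *\<^sub>R b (fst p - snd p))) (at p)"
    unfolding surface_def[abs_def] by (simp add: o_def chart_def domain_iff)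
  then show "surface differentiable (at p)"
    by (rule differentiableI)
  from sym[OF frechet_derivative_at[OF \<open>(surface has_derivative _) (at p)\<close>]]
  show "X_u surface p = a (fst p + snd p) + b (fst p - snd p)"
    "X_v surface p = a (fst p + snd p) - b (fst p - snd p)"
    by (simp_all add: X_u_def X_v_def)
qed

lemma regular_surface_surface: "regular_surface surface domain"
  unfolding regular_surface_def
proof (intro conjI ballI allI open_domain)
  fix p k assume p: "p \<in> domain"
  then have "lprod (a (fst p + snd p)) (a (fst p + snd p)) = 0"
    "lprod (b (fst p - snd p)) (b (fst p - snd p)) = 0"
    "lprod (a (fst p + snd p)) (b (fst p - snd p)) \<noteq> 0"
    using null unfolding domain_iff by auto
  note indep = null_pair_independent[OF this]
  show "surface differentiable at p"
    by (rule surface_partials(3)[OF p])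
  show "X_u surface p \<noteq> 0" "X_v surface p \<noteq> k *\<^sub>R X_u surface p"
    using indep unfolding surface_partials[OF p] by blast+
qed

lemma unit_normal_field_normal: "unit_normal_field surface normal domain"
  unfolding unit_normal_field_def
proof (intro conjI ballI)
  have "continuous_on domain (\<lambda>p. a (fst p + snd p))" "continuous_on domain (\<lambda>p. b (fst p - snd p))"
    by (rule continuous_on_compose2[OF continuous_on_a], (auto intro!: continuous_intros simp: domain_iff))
      (rule continuous_on_compose2[OF continuous_on_b], (auto intro!: continuous_intros simp: domain_iff))
  then show "continuous_on domain normal"
    unfolding normal_def null_pair_normal_def
    by (intro continuous_on_scaleR continuous_on_divide continuous_on_const lprod.continuous_on
        lcross.continuous_on) (auto simp: domain_iff)
next
  fix p assume p: "p \<in> domain"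
  then have "lprod (a (fst p + snd p)) (a (fst p + snd p)) = 0"
    "lprod (b (fst p - snd p)) (b (fst p - snd p)) = 0"
    "lprod (a (fst p + snd p)) (b (fst p - snd p)) \<noteq> 0"
    using null unfolding domain_iff by auto
  then show "lprod (normal p) (X_u surface p) = 0" "lprod (normal p) (X_v surface p) = 0"
    "\<bar>lprod (normal p) (normal p)\<bar> = 1"
    unfolding surface_partials[OF p] normal_def
    by (simp_all add: lprod.add_right lprod.diff_right null_pair_normal_orthogonal null_pair_normal_unit)
qed

lemma BI_general_surface_surface: "BI_general_surface surface domain"
  unfolding BI_general_surface_def
proof (intro conjI ballI regular_surface_surface)
  fix p assume p: "p \<in> domain"
  have "chart p \<in> null_domain"
    using p by (simp add: domain_def)
  then obtain W \<psi> V where W: "open W" "chart p \<in> W" "W \<subseteq> null_domain" "born_infeld_soliton \<psi> V"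
    and graph: "null_surface ` W = graph_x \<psi> V \<or> null_surface ` W = graph_y \<psi> V"
    by (rule null_surface_locally_graph[OF open_null_domain _ order_refl])
  have "surface ` (chart -` W) = null_surface ` chart ` (chart -` W)"
    unfolding surface_def[abs_def] image_image ..
  also have "chart ` (chart -` W) = W"
    by (rule surj_image_vimage_eq[OF surj_chart])
  finally have "surface ` (chart -` W) = null_surface ` W" .
  with graph have "surface ` (chart -` W) = graph_x \<psi> V \<or> surface ` (chart -` W) = graph_y \<psi> V"
    by simp
  moreover have "open (chart -` W)" "p \<in> chart -` W" "chart -` W \<subseteq> domain"
    using W continuous_open_vimage[OF W(1) isCont_chart] by (auto simp: domain_def)
  ultimately show "\<exists>U. open U \<and> p \<in> U \<and> U \<subseteq> domain \<and> (\<exists>\<psi> V. born_infeld_soliton \<psi> V \<and>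
      (surface ` U = graph_x \<psi> V \<or> surface ` U = graph_y \<psi> V \<or> surface ` U = graph_z \<psi> V))"
    using W(4) by blast
qed

end

section \<open>The Bjoerling problem\<close>

lemma bjoerling_null_curves:
  fixes I :: "real set" and c n :: "real \<Rightarrow> real^3"
  assumes I: "open I" "is_interval I"
    and c: "\<And>t. t \<in> I \<Longrightarrow> c differentiable (at t)"
    and c': "\<And>t. t \<in> I \<Longrightarrow> (\<lambda>t. vector_derivative c (at t)) differentiable (at t)"
    and n: "\<And>t. t \<in> I \<Longrightarrow> n differentiable (at t)"
    and n_unit: "\<And>t. t \<in> I \<Longrightarrow> lprod (n t) (n t) = 1"
    and n_normal: "\<And>t. t \<in> I \<Longrightarrow> lprod (n t) (vector_derivative c (at t)) = 0"
  obtains F G a b a' b' where "null_curve_pair I F G a b a' b'" "\<And>t. t \<in> I \<Longrightarrow> F t + G t = c t"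
    "\<And>t. t \<in> I \<Longrightarrow> lprod (a t) (b t) = lprod (vector_derivative c (at t)) (vector_derivative c (at t)) / 2"
    "\<And>t. t \<in> I \<Longrightarrow>
      lcross (a t) (b t) = (lprod (vector_derivative c (at t)) (vector_derivative c (at t)) / 2) *\<^sub>R n t"
proof -
  define c' where "c' t = vector_derivative c (at t)" for t
  define c'' where "c'' t = vector_derivative c' (at t)" for t
  define J where "J t = lcross (n t) (c' t)" for t
  define J' where "J' t = lcross (n t) (c'' t) + lcross (vector_derivative n (at t)) (c' t)" for t
  have c_deriv: "(c has_vector_derivative c' t) (at t)" and c'_deriv: "(c' has_vector_derivative c'' t) (at t)"
    and J_deriv: "(J has_vector_derivative J' t) (at t)" if "t \<in> I" for t
  proof -
    show "(c has_vector_derivative c' t) (at t)" "(c' has_vector_derivative c'' t) (at t)"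
      using c c' that unfolding c'_def[abs_def] c''_def by (simp_all add: vector_derivative_works[symmetric])
    with n[OF that] show "(J has_vector_derivative J' t) (at t)"
      unfolding J_def[abs_def] J'_def
      by (intro lcross.has_vector_derivative) (simp_all add: vector_derivative_works[symmetric])
  qed
  have "continuous_on I J"
    using J_deriv by (intro continuous_at_imp_continuous_on ballI has_vector_derivative_continuous)
  then obtain K where K: "\<And>t. t \<in> I \<Longrightarrow> (K has_vector_derivative J t) (at t)"
    using open_interval_antiderivative[OF I] by blast
  define F where "F t = (1/2) *\<^sub>R (c t + K t)" for t
  define G where "G t = (1/2) *\<^sub>R (c t - K t)" for t
  define a where "a t = (1/2) *\<^sub>R (c' t + J t)" for t
  define b where "b t = (1/2) *\<^sub>R (c' t - J t)" for t
  note frame = null_frame[OF n_unit n_normal, folded c'_def, folded J_def, folded a_def b_def]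
  have "null_curve_pair I F G a b (\<lambda>t. (1/2) *\<^sub>R (c'' t + J' t)) (\<lambda>t. (1/2) *\<^sub>R (c'' t - J' t))"
  proof
    show "open I" by (rule I(1))
  next
    fix t assume "t \<in> I"
    then show "(F has_vector_derivative a t) (at t)"
      unfolding F_def[abs_def] a_def by (intro has_vector_derivative_half_sum(1) c_deriv K)
  next
    fix t assume "t \<in> I"
    then show "(G has_vector_derivative b t) (at t)"
      unfolding G_def[abs_def] b_def by (intro has_vector_derivative_half_sum(2) c_deriv K)
  next
    fix t assume "t \<in> I"
    then show "(a has_vector_derivative (1/2) *\<^sub>R (c'' t + J' t)) (at t)"
      unfolding a_def[abs_def] by (intro has_vector_derivative_half_sum(1) c'_deriv J_deriv)
  next
    fix t assume "t \<in> I"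
    then show "(b has_vector_derivative (1/2) *\<^sub>R (c'' t - J' t)) (at t)"
      unfolding b_def[abs_def] by (intro has_vector_derivative_half_sum(2) c'_deriv J_deriv)
  qed (use frame(1,2) in blast)+
  moreover have "F t + G t = c t" for t
    unfolding F_def G_def by (simp add: scaleR_add_right[symmetric])
  ultimately show ?thesis
    using that frame(3,4) unfolding c'_def by blast
qed

lemma born_infeld_bjoerling:
  fixes I :: "real set" and c n :: "real \<Rightarrow> real^3"
  assumes I: "open I" "is_interval I"
    and c: "\<And>t. t \<in> I \<Longrightarrow> c differentiable (at t)"
    and c': "\<And>t. t \<in> I \<Longrightarrow> (\<lambda>t. vector_derivative c (at t)) differentiable (at t)"
    and n: "\<And>t. t \<in> I \<Longrightarrow> n differentiable (at t)"
    and c'_non_null: "\<And>t. t \<in> I \<Longrightarrow> lprod (vector_derivative c (at t)) (vector_derivative c (at t)) \<noteq> 0"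
    and n_unit: "\<And>t. t \<in> I \<Longrightarrow> lprod (n t) (n t) = 1"
    and n_normal: "\<And>t. t \<in> I \<Longrightarrow> lprod (n t) (vector_derivative c (at t)) = 0"
  shows "\<exists>\<Omega> X N. open \<Omega> \<and> (\<lambda>t. (t, 0)) ` I \<subseteq> \<Omega> \<and>
    BI_general_surface X \<Omega> \<and> unit_normal_field X N \<Omega> \<and> (\<forall>t\<in>I. X (t, 0) = c t \<and> N (t, 0) = n t)"
proof -
  obtain F G a b a' b' where "null_curve_pair I F G a b a' b'" and sum: "\<And>t. t \<in> I \<Longrightarrow> F t + G t = c t"
    and ab: "\<And>t. t \<in> I \<Longrightarrow> lprod (a t) (b t) = lprod (vector_derivative c (at t)) (vector_derivative c (at t)) / 2"
    and normal: "\<And>t. t \<in> I \<Longrightarrow>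
      lcross (a t) (b t) = (lprod (vector_derivative c (at t)) (vector_derivative c (at t)) / 2) *\<^sub>R n t"
    using bjoerling_null_curves[OF I c c' n n_unit n_normal] by blast
  then interpret null_curve_pair I F G a b a' b'
    by simp
  have "lprod (a t) (b t) \<noteq> 0" if "t \<in> I" for t
    using ab[OF that] c'_non_null[OF that] by simp
  then have "(\<lambda>t. (t, 0)) ` I \<subseteq> domain"
    by (auto simp: domain_iff)
  moreover have "surface (t, 0) = c t" "normal (t, 0) = n t" if "t \<in> I" for t
    using sum[OF that] ab[OF that] normal[OF that] c'_non_null[OF that]
    by (simp_all add: surface_def null_surface_def chart_def normal_def null_pair_normal_def)
  ultimately show ?thesis
    using open_domain BI_general_surface_surface unit_normal_field_normal by blast
qed

theorem corollary2p1:
  fixes I :: "real set" and c n :: "real \<Rightarrow> real^3"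
  assumes I: "open I" "is_interval I" "I \<noteq> {}"
    and c_an: "real_analytic_curve_on c I"
    and c_reg: "\<forall>t\<in>I. vector_derivative c (at t) \<noteq> 0"
    and c_type: "(\<forall>t\<in>I. lprod (vector_derivative c (at t)) (vector_derivative c (at t)) > 0)
               \<or> (\<forall>t\<in>I. lprod (vector_derivative c (at t)) (vector_derivative c (at t)) < 0)"
    and n_an: "real_analytic_curve_on n I"
    and n_unit: "\<forall>t\<in>I. lprod (n t) (n t) = 1"
    and n_normal: "\<forall>t\<in>I. lprod (n t) (vector_derivative c (at t)) = 0"
  shows "\<exists>(\<Omega>::(real \<times> real) set) X N.
           open \<Omega> \<and> (\<lambda>t. (t, 0)) ` I \<subseteq> \<Omega> \<and>
           BI_general_surface X \<Omega> \<and> unit_normal_field X N \<Omega> \<and>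
           (\<forall>t\<in>I. X (t, 0) = c t \<and> N (t, 0) = n t)"
proof (rule born_infeld_bjoerling[OF I(1,2)])
  fix t assume t: "t \<in> I"
  show "c differentiable (at t)" "n differentiable (at t)"
    using real_analytic_curve_on_differentiable[OF _ I(1) t] c_an n_an by blast+
  show "(\<lambda>t. vector_derivative c (at t)) differentiable (at t)"
    using real_analytic_curve_on_differentiable[OF real_analytic_curve_on_vector_derivative[OF c_an I(1)] I(1) t] .
  show "lprod (vector_derivative c (at t)) (vector_derivative c (at t)) \<noteq> 0"
    using c_type t by force
qed (use n_unit n_normal in blast)+

end
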